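(* Let $\lambda\in W\Lambda$ and $\alpha,\beta$ positive roots such that both $(\lambda,\lambda^\alpha)$ and $(\lambda^\alpha,\lambda^{\alpha,\beta})$ are admissible, where $\lambda^{\alpha,\beta}=(\lambda^\alpha)^\beta$. (i) If $(\alpha,\beta)=2$, then $\alpha=\beta$ and it is a simple root. (ii) Otherwise, there exist positive roots $\alpha'\ne\alpha$ and $\beta'$ such that $(\lambda,\lambda^{\alpha'})$ and $(\lambda^{\alpha'},\lambda^{\alpha',\beta'})$ are admissible and $\lambda^{\alpha,\beta}=\lambda^{\alpha',\beta'}$; the pair $(\alpha',\beta')$ is uniquely determined by these conditions.
   Context: Fix integers $n\ge2$, $r\ge n+2$. Let $\varepsilon_1,\dots,\varepsilon_n$ be an orthonormal basis of $\mathbb R^n$ (inner product $(\cdot,\cdot)$), $\bar\varepsilon_i=\varepsilon_i-\frac1n\sum_j\varepsilon_j$, $P=\sum_i\mathbb Z\bar\varepsilon_i$, simple roots $\alpha_i=\varepsilon_i-\varepsilon_{i+1}$ ($1\le i\le n-1$), $Q=\sum_i\mathbb Z\alpha_i$, $\theta=\alpha_1+\dots+\alpha_{n-1}$, positive roots $\varepsilon_i-\varepsilon_j$ ($i<j$). Fix $\Lambda\in P$ with $(\Lambda,\alpha_i)>0$ for all $i$ and $(\Lambda,\theta)<r$. $S_n$ acts by permuting the $\varepsilon_i$; $\ell(\sigma)$ is the length of $\sigma$. Each element of $W\Lambda=\{\sigma\Lambda+r\gamma:\sigma\in S_n,\gamma\in Q\}$ is uniquely written $\lambda=\sigma\Lambda+r\gamma$,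 and $\deg\lambda=\ell(\sigma)-2|\gamma|$, where $|\sum c_i\alpha_i|=\sum c_i$. For a positive root $\alpha$, $m_\alpha(\lambda)$ is the integer with $0<m_\alpha(\lambda)<r$, $m_\alpha(\lambda)\equiv(\lambda,\alpha)\bmod r$, and $\lambda^\alpha=\lambda-m_\alpha(\lambda)\alpha\in W\Lambda$. The pair $(\lambda,\lambda^\alpha)$ is called admissible if $\deg\lambda^\alpha=\deg\lambda+1$. *)

theory Defs
  imports Complex_Main "HOL-Combinatorics.Permutations"
begin

text \<open>Vectors of R^n are represented as functions nat => real, coordinates 1..n
  (they vanish outside {1..n} for all vectors built below).\<close>

definition eps :: "nat \<Rightarrow> nat \<Rightarrow> real" where
  "eps i = (\<lambda>j. if j = i then 1 else 0)"

definition ip :: "nat \<Rightarrow> (nat \<Rightarrow> real) \<Rightarrow> (nat \<Rightarrow> real) \<Rightarrow> real" where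
  "ip n v w = (\<Sum>k=1..n. v k * w k)"

definition epsbar :: "nat \<Rightarrow> nat \<Rightarrow> nat \<Rightarrow> real" where
  "epsbar n i = (\<lambda>k. eps i k - (1 / real n) * (\<Sum>j=1..n. eps j k))"

definition in_P :: "nat \<Rightarrow> (nat \<Rightarrow> real) \<Rightarrow> bool" where
  "in_P n v \<longleftrightarrow> (\<exists>a :: nat \<Rightarrow> int. v = (\<lambda>k. \<Sum>i=1..n. of_int (a i) * epsbar n i k))"

definition sroot :: "nat \<Rightarrow> nat \<Rightarrow> real" where
  "sroot i = (\<lambda>k. eps i k - eps (Suc i) k)"

definition theta :: "nat \<Rightarrow> nat \<Rightarrow> real" where
  "theta n = (\<lambda>k. \<Sum>i=1..n-1. sroot i k)"

definition is_simple_root :: "nat \<Rightarrow> (nat \<Rightarrow> real) \<Rightarrow> bool" where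
  "is_simple_root n a \<longleftrightarrow> (\<exists>i. 1 \<le> i \<and> i \<le> n - 1 \<and> a = sroot i)"

definition posroot :: "nat \<Rightarrow> (nat \<Rightarrow> real) \<Rightarrow> bool" where
  "posroot n a \<longleftrightarrow> (\<exists>i j. 1 \<le> i \<and> i < j \<and> j \<le> n \<and> a = (\<lambda>k. eps i k - eps j k))"

definition rootcomb :: "nat \<Rightarrow> (nat \<Rightarrow> int) \<Rightarrow> nat \<Rightarrow> real" where
  "rootcomb n c = (\<lambda>k. \<Sum>i=1..n-1. of_int (c i) * sroot i k)"

text \<open>Permutation action: sigma eps_i = eps_(sigma i).\<close>
definition act :: "(nat \<Rightarrow> nat) \<Rightarrow> (nat \<Rightarrow> real) \<Rightarrow> nat \<Rightarrow> real" where
  "act \<sigma> v = (\<lambda>j. v (inv \<sigma> j))"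

definition perm_len :: "nat \<Rightarrow> (nat \<Rightarrow> nat) \<Rightarrow> nat" where
  "perm_len n \<sigma> = card {(i, j). 1 \<le> i \<and> i < j \<and> j \<le> n \<and> \<sigma> j < \<sigma> i}"

definition in_WLam :: "nat \<Rightarrow> nat \<Rightarrow> (nat \<Rightarrow> real) \<Rightarrow> (nat \<Rightarrow> real) \<Rightarrow> bool" where
  "in_WLam n r \<Lambda> l \<longleftrightarrow>
     (\<exists>\<sigma> c. \<sigma> permutes {1..n} \<and> l = (\<lambda>k. act \<sigma> \<Lambda> k + real r * rootcomb n c k))"

text \<open>deg (sigma Lambda + r gamma) = l(sigma) - 2|gamma| (well defined by uniqueness).\<close>
definition deg :: "nat \<Rightarrow> nat \<Rightarrow> (nat \<Rightarrow> real) \<Rightarrow> (nat \<Rightarrow> real) \<Rightarrow> int" where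
  "deg n r \<Lambda> l = (THE d. \<exists>\<sigma> c. \<sigma> permutes {1..n} \<and> l = (\<lambda>k. act \<sigma> \<Lambda> k + real r * rootcomb n c k)
        \<and> d = int (perm_len n \<sigma>) - 2 * (\<Sum>i=1..n-1. c i))"

definition mval :: "nat \<Rightarrow> nat \<Rightarrow> (nat \<Rightarrow> real) \<Rightarrow> (nat \<Rightarrow> real) \<Rightarrow> int" where
  "mval n r l a = (THE m :: int. 0 < m \<and> m < int r \<and>
      (\<exists>k :: int. ip n l a = of_int m + of_int (int r * k)))"

definition refl :: "nat \<Rightarrow> nat \<Rightarrow> (nat \<Rightarrow> real) \<Rightarrow> (nat \<Rightarrow> real) \<Rightarrow> nat \<Rightarrow> real" where
  "refl n r l a = (\<lambda>k. l k - of_int (mval n r l a) * a k)"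

definition admissible :: "nat \<Rightarrow> nat \<Rightarrow> (nat \<Rightarrow> real) \<Rightarrow> (nat \<Rightarrow> real) \<Rightarrow> (nat \<Rightarrow> real) \<Rightarrow> bool" where
  "admissible n r \<Lambda> l a \<longleftrightarrow> deg n r \<Lambda> (refl n r l a) = deg n r \<Lambda> l + 1"

end

theory Submission
  imports Defs
begin

text \<open>
  Write \<open>\<sigma>\<Lambda> + r\<gamma>\<close> in coordinates as \<open>k \<mapsto> \<Lambda> (\<tau> k) + r H k\<close>. Since the coordinates of \<open>\<Lambda>\<close>
  strictly decrease and spread by less than \<open>r\<close>, reflecting in \<open>\<epsilon>\<^sub>i - \<epsilon>\<^sub>j\<close> swaps the entries
  \<open>i\<close>, \<open>j\<close> of \<open>\<tau>\<close> and moves \<open>H\<close> by \<open>0\<close> or \<open>\<epsilon>\<^sub>j - \<epsilon>\<^sub>i\<close>; the degree goes up by \<open>1 + 2e\<close>, where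
  \<open>e\<close> counts the positions strictly between \<open>i\<close> and \<open>j\<close> that obstruct the step (an affine version
  of the inversions created by a transposition). So a chain \<open>\<lambda> \<rightarrow> \<lambda>\<^sup>\<alpha> \<rightarrow> \<lambda>\<^sup>\<alpha>\<^sup>,\<^sup>\<beta>\<close> is admissible iff
  both counts vanish, and any other chain of two reflections with the same endpoint is admissible
  automatically, since its degree gain \<open>2 + 2e + 2e'\<close> must also be 2. Part (ii) thus reduces to the
  factorisations \<open>(a b)(c d)\<close> of a fixed product of two transpositions with a prescribed translation
  part: for disjoint transpositions the only other one is the swapped product, and for a 3-cycle
  exactly one of its two other factorisations fits. In part (i), \<open>(\<alpha>, \<beta>) = 2\<close> forces \<open>\<alpha> = \<beta>\<close>,
  and two unobstructed reflections in the same root \<open>\<epsilon>\<^sub>i - \<epsilon>\<^sub>j\<close> force \<open>j = i + 1\<close>.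
\<close>

section \<open>Roots and coordinates\<close>

definition eps_diff :: "nat \<Rightarrow> nat \<Rightarrow> nat \<Rightarrow> real" where
  "eps_diff i j = (\<lambda>k. eps i k - eps j k)"

lemma posroot_iff: "posroot n \<alpha> \<longleftrightarrow> (\<exists>i j. 1 \<le> i \<and> i < j \<and> j \<le> n \<and> \<alpha> = eps_diff i j)"
  unfolding posroot_def eps_diff_def ..

lemma sum_mult_eps: "finite A \<Longrightarrow> (\<Sum>k\<in>A. v k * eps i k) = (if i \<in> A then v i else 0)"
  by (simp add: eps_def if_distrib[of "(*) _"] sum.delta' cong: if_cong)

lemma ip_eps_diff:
  assumes "i \<in> {1..n}" "j \<in> {1..n}"
  shows "ip n v (eps_diff i j) = v i - v j"
  using assms by (simp add: ip_def eps_diff_def right_diff_distrib sum_subtractf sum_mult_eps)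

lemma eps_diff_eq_iff:
  assumes "a < b" "i < j"
  shows "eps_diff a b = eps_diff i j \<longleftrightarrow> a = i \<and> b = j"
proof
  assume "eps_diff a b = eps_diff i j"
  then have "eps_diff a b a = eps_diff i j a" "eps_diff a b b = eps_diff i j b" by simp_all
  then show "a = i \<and> b = j" using assms unfolding eps_diff_def eps_def by (auto split: if_splits)
qed simp

lemma ip_eps_diff_eq_2:
  assumes "1 \<le> i" "i < j" "j \<le> n" "1 \<le> k" "k < m" "m \<le> n"
  shows "ip n (eps_diff i j) (eps_diff k m) = 2 \<longleftrightarrow> k = i \<and> m = j"
proof -
  have "ip n (eps_diff i j) (eps_diff k m) = eps_diff i j k - eps_diff i j m"
    using assms by (simp add: ip_eps_diff)
  then show ?thesis using assms by (auto simp: eps_diff_def eps_def)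
qed

lemma theta_eq_eps_diff:
  assumes "n \<ge> 1"
  shows "theta n = eps_diff 1 n"
proof
  fix k
  have "theta n k = - (\<Sum>i=1..n-1. eps (Suc i) k - eps i k)"
    unfolding theta_def sroot_def by (simp add: sum_negf[symmetric])
  also have "(\<Sum>i=1..n-1. eps (Suc i) k - eps i k) = eps n k - eps 1 k"
    using sum_Suc_diff[of 1 "n - 1" "\<lambda>i. eps i k"] assms by simp
  finally show "theta n k = eps_diff 1 n k" unfolding eps_diff_def by simp
qed

text \<open>The \<open>k\<close>-th coordinate of \<open>\<Sum>c\<^sub>i\<alpha>\<^sub>i\<close> is \<open>c\<^sub>k - c\<^sub>k\<^sub>-\<^sub>1\<close>, with \<open>c\<^sub>0 = c\<^sub>n = 0\<close>.\<close>

definition rootcomb_coord :: "nat \<Rightarrow> (nat \<Rightarrow> int) \<Rightarrow> nat \<Rightarrow> int" where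
  "rootcomb_coord n c k =
     (if 1 \<le> k \<and> k \<le> n - 1 then c k else 0) - (if 2 \<le> k \<and> k \<le> n then c (k - 1) else 0)"

lemma rootcomb_eq_coord: "rootcomb n c k = of_int (rootcomb_coord n c k)"
proof -
  have "rootcomb n c k = (\<Sum>i=1..n-1. of_int (c i) * eps i k) - (\<Sum>i=1..n-1. of_int (c i) * eps (Suc i) k)"
    unfolding rootcomb_def sroot_def by (simp add: right_diff_distrib sum_subtractf)
  also have "(\<Sum>i=1..n-1. of_int (c i) * eps i k) = (\<Sum>i=1..n-1. of_int (c i) * eps k i)"
    by (rule sum.cong) (auto simp: eps_def)
  also have "(\<Sum>i=1..n-1. of_int (c i) * eps (Suc i) k)
               = (if k = 0 then 0 else \<Sum>i=1..n-1. of_int (c i) * eps (k - 1) i)"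
    by (cases k) (auto simp: eps_def intro!: sum.cong)
  finally show ?thesis by (auto simp: sum_mult_eps rootcomb_coord_def)
qed

lemma rootcomb_coord_inj:
  assumes "\<forall>k\<in>{1..n}. rootcomb_coord n c k = rootcomb_coord n c' k"
  shows "1 \<le> t \<Longrightarrow> t \<le> n - 1 \<Longrightarrow> c t = c' t"
proof (induction t)
  case (Suc t)
  have "rootcomb_coord n c (Suc t) = rootcomb_coord n c' (Suc t)" using assms Suc.prems by auto
  then show ?case using Suc unfolding rootcomb_coord_def by (cases "t = 0") (auto split: if_splits)
qed simp

text \<open>Subtracts \<open>\<delta>(\<epsilon>\<^sub>i - \<epsilon>\<^sub>j) = \<delta>(\<alpha>\<^sub>i + \<dots> + \<alpha>\<^sub>j\<^sub>-\<^sub>1)\<close> from \<open>\<Sum>c\<^sub>t\<alpha>\<^sub>t\<close>.\<close>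

definition coeff_shift :: "(nat \<Rightarrow> int) \<Rightarrow> nat \<Rightarrow> nat \<Rightarrow> int \<Rightarrow> nat \<Rightarrow> int" where
  "coeff_shift c i j \<delta> = (\<lambda>t. if i \<le> t \<and> t < j then c t - \<delta> else c t)"

lemma rootcomb_coord_coeff_shift:
  assumes "1 \<le> i" "i < j" "j \<le> n"
  shows "rootcomb_coord n (coeff_shift c i j \<delta>) u
           = rootcomb_coord n c u - \<delta> * (of_bool (u = i) - of_bool (u = j))"
  using assms unfolding rootcomb_coord_def coeff_shift_def by auto

lemma sum_coeff_shift:
  assumes "1 \<le> i" "i < j" "j \<le> n"
  shows "(\<Sum>t=1..n-1. coeff_shift c i j \<delta> t) = (\<Sum>t=1..n-1. c t) - \<delta> * int (j - i)"
proof -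
  have "(\<Sum>t=1..n-1. coeff_shift c i j \<delta> t) = (\<Sum>t=1..n-1. c t - \<delta> * of_bool (i \<le> t \<and> t < j))"
    unfolding coeff_shift_def by (rule sum.cong) auto
  also have "\<dots> = (\<Sum>t=1..n-1. c t) - \<delta> * int (card ({1..n-1} \<inter> {t. i \<le> t \<and> t < j}))"
    by (simp add: sum_subtractf sum_distrib_left[symmetric] sum_of_bool_eq)
  also have "{1..n-1} \<inter> {t. i \<le> t \<and> t < j} = {i..<j}" using assms by auto
  finally show ?thesis by simp
qed

lemma mval_eqI:
  assumes "ip n l a = of_int z" "0 < m" "m < int r" "int r dvd z - m"
  shows "mval n r l a = m"
proof -
  obtain q where q: "z - m = int r * q" using assms(4) by (rule dvdE)
  show ?thesis unfolding mval_def
  proof (rule the_equality)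
    show "0 < m \<and> m < int r \<and> (\<exists>k. ip n l a = of_int m + of_int (int r * k))"
      using assms(1-3) q by (intro conjI exI[of _ q]) (simp_all add: algebra_simps flip: of_int_diff)
  next
    fix m' assume "0 < m' \<and> m' < int r \<and> (\<exists>k. ip n l a = of_int m' + of_int (int r * k))"
    then obtain k where m': "0 < m'" "m' < int r" "z = m' + int r * k"
      using assms(1) by (metis of_int_add of_int_eq_iff)
    then have "m' - m = int r * (q - k)" using q by (simp add: algebra_simps)
    moreover have "\<bar>m' - m\<bar> < int r" using m' assms(2,3) by auto
    ultimately show "m' = m" using dvd_imp_le_int[of "m' - m" "int r"] by fastforce
  qed
qed

section \<open>Inversions and transpositions\<close>

lemma perm_len_inv:
  assumes \<sigma>: "\<sigma> permutes {1..n}"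
  shows "perm_len n (inv \<sigma>) = perm_len n \<sigma>"
proof -
  let ?\<tau> = "inv \<sigma>"
  let ?A = "{(i, j). 1 \<le> i \<and> i < j \<and> j \<le> n \<and> ?\<tau> j < ?\<tau> i}"
  let ?B = "{(i, j). 1 \<le> i \<and> i < j \<and> j \<le> n \<and> \<sigma> j < \<sigma> i}"
  have inverses: "\<sigma> (?\<tau> x) = x" "?\<tau> (\<sigma> x) = x" for x using permutes_inverses[OF \<sigma>] by auto
  have "x \<in> {1..n} \<Longrightarrow> \<sigma> x \<in> {1..n}" "x \<in> {1..n} \<Longrightarrow> ?\<tau> x \<in> {1..n}" for x
    using permutes_in_image[OF \<sigma>] permutes_in_image[OF permutes_inv[OF \<sigma>]] by auto
  then have "bij_betw (\<lambda>(i, j). (?\<tau> j, ?\<tau> i)) ?A ?B"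
    by (intro bij_betw_byWitness[where f'="\<lambda>(a, b). (\<sigma> b, \<sigma> a)"]) (force simp: inverses)+
  then show ?thesis unfolding perm_len_def by (rule bij_betw_same_card)
qed

lemma perm_len_eq_sum:
  "int (perm_len n \<tau>) = (\<Sum>a\<in>{1..n}. \<Sum>b\<in>{1..n}. of_bool (a < b \<and> \<tau> b < \<tau> a))"
proof -
  have "(\<Sum>a\<in>{1..n}. \<Sum>b\<in>{1..n}. of_bool (a < b \<and> \<tau> b < \<tau> a))
          = (\<Sum>x\<in>{1..n} \<times> {1..n}. of_bool (fst x < snd x \<and> \<tau> (snd x) < \<tau> (fst x)) :: int)"
    by (simp only: sum.cartesian_product split_def)
  also have "\<dots> = int (card ({1..n} \<times> {1..n} \<inter> {x. fst x < snd x \<and> \<tau> (snd x) < \<tau> (fst x)}))"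
    by (subst sum_of_bool_eq) auto
  also have "{1..n} \<times> {1..n} \<inter> {x. fst x < snd x \<and> \<tau> (snd x) < \<tau> (fst x)}
               = {(i, j). 1 \<le> i \<and> i < j \<and> j \<le> n \<and> \<tau> j < \<tau> i}" by auto
  finally show ?thesis unfolding perm_len_def by simp
qed

lemma double_sum_permute:
  assumes "p permutes S"
  shows "(\<Sum>a\<in>S. \<Sum>b\<in>S. f a b) = (\<Sum>a\<in>S. \<Sum>b\<in>S. f (p a) (p b))"
proof -
  have "(\<Sum>b\<in>S. g b) = (\<Sum>b\<in>S. g (p b))" for g :: "'a \<Rightarrow> 'b"
    using sum.permute[OF assms, of g] by (simp add: comp_def)
  from this[of "\<lambda>a. \<Sum>b\<in>S. f a b"] this[of "f (p _)"] show ?thesis by simp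
qed

lemma double_sum_vanishing_off_pair:
  fixes F :: "nat \<Rightarrow> nat \<Rightarrow> int"
  assumes "finite S" "i \<in> S" "j \<in> S" "i \<noteq> j"
    and "\<And>a b. a \<notin> {i, j} \<Longrightarrow> b \<notin> {i, j} \<Longrightarrow> F a b = 0"
  shows "(\<Sum>a\<in>S. \<Sum>b\<in>S. F a b)
           = F i i + F i j + F j i + F j j + (\<Sum>k\<in>S - {i, j}. F i k + F j k + F k i + F k j)"
proof -
  have split: "sum g S = g i + g j + sum g (S - {i, j})" for g :: "nat \<Rightarrow> int"
    using assms(1-4) by (simp add: sum.remove[of S i] sum.remove[of "S - {i}" j] insert_Diff_if
        Diff_insert2[symmetric])
  have "(\<Sum>a\<in>S - {i, j}. \<Sum>b\<in>S. F a b) = (\<Sum>a\<in>S - {i, j}. F a i + F a j)"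
    using assms(5) by (intro sum.cong) (auto simp: split[of "F _"])
  then show ?thesis by (simp add: split[of "\<lambda>a. \<Sum>b\<in>S. F a b"] split[of "F i"] split[of "F j"]
        sum.distrib algebra_simps)
qed

definition between_set :: "(nat \<Rightarrow> nat) \<Rightarrow> nat \<Rightarrow> nat \<Rightarrow> nat set" where
  "between_set \<tau> i j = {k. i < k \<and> k < j \<and> min (\<tau> i) (\<tau> j) < \<tau> k \<and> \<tau> k < max (\<tau> i) (\<tau> j)}"

lemma between_set_subset: "between_set \<tau> i j \<subseteq> {i<..<j}"
  unfolding between_set_def by auto

lemma perm_len_transpose:
  assumes \<tau>: "\<tau> permutes {1..n}" and ij: "1 \<le> i" "i < j" "j \<le> n"
  shows "int (perm_len n (\<tau> \<circ> transpose i j)) - int (perm_len n \<tau>)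
           = (if \<tau> i < \<tau> j then 1 else -1) * (1 + 2 * int (card (between_set \<tau> i j)))"
proof -
  let ?S = "{1..n}" and ?t = "transpose i j"
  have inj: "\<tau> x = \<tau> y \<longleftrightarrow> x = y" for x y using permutes_inj[OF \<tau>] by (auto dest: injD)
  define F :: "nat \<Rightarrow> nat \<Rightarrow> int"
    where "F a b = of_bool (?t a < ?t b \<and> \<tau> b < \<tau> a) - of_bool (a < b \<and> \<tau> b < \<tau> a)" for a b
  have "int (perm_len n (\<tau> \<circ> ?t))
          = (\<Sum>a\<in>?S. \<Sum>b\<in>?S. of_bool (?t a < ?t b \<and> \<tau> (?t (?t b)) < \<tau> (?t (?t a))))"
    unfolding perm_len_eq_sum comp_def using ij by (intro double_sum_permute permutes_swap_id) auto
  then have "int (perm_len n (\<tau> \<circ> ?t)) - int (perm_len n \<tau>) = (\<Sum>a\<in>?S. \<Sum>b\<in>?S. F a b)"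
    by (simp add: perm_len_eq_sum F_def sum_subtractf del: sum_of_bool_eq)
  \<comment> \<open>After reindexing by the transposition, only pairs meeting \<open>{i, j}\<close> can change status.\<close>
  also have "\<dots> = F i i + F i j + F j i + F j j + (\<Sum>k\<in>?S - {i, j}. F i k + F j k + F k i + F k j)"
    by (rule double_sum_vanishing_off_pair) (use ij in \<open>auto simp: F_def\<close>)
  also have "F i i + F i j + F j i + F j j = (if \<tau> i < \<tau> j then 1 else -1)"
    using ij inj[of i j] unfolding F_def by auto
  also have "(\<Sum>k\<in>?S - {i, j}. F i k + F j k + F k i + F k j)
               = (\<Sum>k\<in>?S - {i, j}. (if \<tau> i < \<tau> j then 2 else -2) * of_bool (k \<in> between_set \<tau> i j))"
  proof (rule sum.cong)
    fix k assume "k \<in> ?S - {i, j}"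
    then show "F i k + F j k + F k i + F k j
                 = (if \<tau> i < \<tau> j then 2 else -2) * of_bool (k \<in> between_set \<tau> i j)"
      using ij inj[of k i] inj[of k j] inj[of i j]
      unfolding F_def between_set_def by (auto simp: transpose_def)
  qed simp
  also have "\<dots> = (if \<tau> i < \<tau> j then 2 else -2) * int (card (between_set \<tau> i j))"
  proof -
    have "(?S - {i, j}) \<inter> between_set \<tau> i j = between_set \<tau> i j"
      using between_set_subset[of \<tau> i j] ij by auto
    then show ?thesis by (simp add: sum_distrib_left[symmetric])
  qed
  finally show ?thesis by (simp add: comp_def)
qed

text \<open>The reflection in \<open>\<epsilon>\<^sub>i - \<epsilon>\<^sub>j\<close> raises the degree by \<open>1 + 2 card (excess_set \<tau> i j)\<close>,
  see \<open>deg_refl_orbit_pt\<close>.\<close>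

definition excess_set :: "(nat \<Rightarrow> nat) \<Rightarrow> nat \<Rightarrow> nat \<Rightarrow> nat set" where
  "excess_set \<tau> i j = (if \<tau> i < \<tau> j then between_set \<tau> i j else {i<..<j} - between_set \<tau> i j)"

lemma finite_excess_set: "finite (excess_set \<tau> i j)"
  unfolding excess_set_def using finite_subset[OF between_set_subset] by auto

lemma perm_len_transpose_excess:
  assumes \<tau>: "\<tau> permutes {1..n}" and ij: "1 \<le> i" "i < j" "j \<le> n"
  shows "int (perm_len n (\<tau> \<circ> transpose i j)) - int (perm_len n \<tau>) + 2 * of_bool (\<tau> j < \<tau> i) * int (j - i)
           = 1 + 2 * int (card (excess_set \<tau> i j))"
proof (cases "\<tau> i < \<tau> j")
  case True
  then show ?thesis using perm_len_transpose[OF assms] by (simp add: excess_set_def)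
next
  case False
  then have "\<tau> j < \<tau> i" using permutes_inj[OF \<tau>] ij by (metis injD linorder_neqE_nat less_irrefl)
  have "card (excess_set \<tau> i j) = card {i<..<j} - card (between_set \<tau> i j)"
    using False card_Diff_subset[OF finite_subset[OF between_set_subset] between_set_subset]
    by (simp add: excess_set_def)
  moreover have "card (between_set \<tau> i j) \<le> card {i<..<j}"
    using between_set_subset by (rule card_mono[rotated]) simp
  ultimately show ?thesis
    using perm_len_transpose[OF assms] False \<open>\<tau> j < \<tau> i\<close> ij by simp
qed

lemma excess_set_emptyD:
  assumes "excess_set \<tau> i j = {}" "i < k" "k < j"
  shows "k \<in> between_set \<tau> i j \<longleftrightarrow> \<tau> j < \<tau> i"
  using assms unfolding excess_set_def by (auto simp: between_set_def split: if_splits)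

lemma between_set_transpose:
  assumes "i < j"
  shows "between_set (\<tau> \<circ> transpose i j) i j = between_set \<tau> i j"
  using assms unfolding between_set_def by (auto simp: min.commute max.commute)

lemma excess_set_transpose_adjacent:
  assumes "inj \<tau>" "i < j" "excess_set \<tau> i j = {}" "excess_set (\<tau> \<circ> transpose i j) i j = {}"
  shows "j = Suc i"
proof (rule ccontr)
  assume "j \<noteq> Suc i"
  then have "Suc i \<in> {i<..<j}" using assms(2) by auto
  moreover have "\<tau> i \<noteq> \<tau> j" using assms(1,2) by (auto dest: injD)
  ultimately show False
    using assms(3,4) between_set_subset[of \<tau> i j] between_set_transpose[OF assms(2), of \<tau>]
    by (auto simp: excess_set_def split: if_splits)
qed

lemma permutes_comp_transpose:
  fixes a b n :: nat
  assumes "\<tau> permutes {1..n}" "1 \<le> a" "a < b" "b \<le> n"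
  shows "\<tau> \<circ> transpose a b permutes {1..n}"
  using assms by (intro permutes_compose[OF _ assms(1)] permutes_swap_id) auto

section \<open>Products of two transpositions\<close>

lemma moved_points_transpose_comp:
  fixes a b c d :: nat
  assumes "a < b" "c < d" "(a, b) \<noteq> (c, d)"
  shows "{x. (transpose a b \<circ> transpose c d) x \<noteq> x} = {a, b, c, d}"
  using assms by (auto simp: transpose_def)

lemma transpose_comp_eq_support:
  fixes a b c d i j k l :: nat
  assumes "a < b" "c < d" "i < j" "k < l" "(i, j) \<noteq> (k, l)"
    and eq: "transpose a b \<circ> transpose c d = transpose i j \<circ> transpose k l"
  shows "(a, b) \<noteq> (c, d)" and "{a, b, c, d} = {i, j, k, l}"
proof -
  have moved: "{x. (transpose i j \<circ> transpose k l) x \<noteq> x} = {i, j, k, l}"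
    using moved_points_transpose_comp assms(3-5) .
  show "(a, b) \<noteq> (c, d)"
  proof
    assume "(a, b) = (c, d)"
    then have "transpose i j \<circ> transpose k l = id" using eq by simp
    then show False using moved by auto
  qed
  then show "{a, b, c, d} = {i, j, k, l}"
    using moved_points_transpose_comp[OF assms(1,2)] moved eq by simp
qed

lemma transpose_comp_eq_disjoint:
  fixes a b c d i j k l :: nat
  assumes "i < j" "k < l" "{i, j} \<inter> {k, l} = {}" "a < b" "c < d"
    and eq: "transpose a b \<circ> transpose c d = transpose i j \<circ> transpose k l"
  shows "(a, b, c, d) = (i, j, k, l) \<or> (a, b, c, d) = (k, l, i, j)"
proof -
  have "(i, j) \<noteq> (k, l)" using assms(3) by auto
  note support = transpose_comp_eq_support[OF assms(4,5,1,2) this eq]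
  have "card ({a, b} \<inter> {c, d}) = 0"
  proof -
    have "card {a, b} + card {c, d} = card ({a, b} \<union> {c, d}) + card ({a, b} \<inter> {c, d})"
      by (rule card_Un_Int) simp_all
    moreover have "{a, b} \<union> {c, d} = {i, j, k, l}" using support(2) by auto
    then have "card ({a, b} \<union> {c, d}) = 4" using assms(1-3) by auto
    moreover have "card {a, b} \<le> 2" "card {c, d} \<le> 2" by (simp_all add: card_insert_if)
    ultimately show ?thesis by linarith
  qed
  then have "{a, b} \<inter> {c, d} = {}" by simp
  then have "(transpose i j \<circ> transpose k l) a = b" "(transpose i j \<circ> transpose k l) c = d"
    using eq[THEN fun_cong, of a] eq[THEN fun_cong, of c] by auto
  moreover have "(transpose i j \<circ> transpose k l) x = (if x = i then j else if x = j then i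
                   else if x = k then l else if x = l then k else x)" for x
    using assms(3) by (auto simp: transpose_def)
  moreover have "{a, c} \<subseteq> {i, j, k, l}" using support(2) by auto
  ultimately show ?thesis using support(1) assms(1,2,4,5) by (auto split: if_splits)
qed

lemma transpose_comp_eq_disjoint_iff:
  fixes a b c d i j k l :: nat
  assumes "i < j" "k < l" "{i, j} \<inter> {k, l} = {}" "a < b" "c < d"
  shows "transpose a b \<circ> transpose c d = transpose i j \<circ> transpose k l
           \<longleftrightarrow> (a, b, c, d) \<in> {(i, j, k, l), (k, l, i, j)}"
proof
  have "transpose k l \<circ> transpose i j = transpose i j \<circ> transpose k l"
    using assms(3) by (auto simp: fun_eq_iff transpose_def)
  then show "(a, b, c, d) \<in> {(i, j, k, l), (k, l, i, j)} \<Longrightarrow>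
               transpose a b \<circ> transpose c d = transpose i j \<circ> transpose k l" by auto
qed (use transpose_comp_eq_disjoint[OF assms] in auto)

lemma transpose_comp_eq_cycle:
  fixes a b c d p q s :: nat
  assumes pqs: "p < q" "q < s" and "a < b" "c < d"
    and eq: "transpose a b \<circ> transpose c d = transpose p q \<circ> transpose q s"
  shows "(a, b, c, d) \<in> {(p, q, q, s), (q, s, p, s), (p, s, p, q)}"
proof -
  have "{a, b, c, d} = {p, q, s}"
    using transpose_comp_eq_support(2)[OF assms(3,4) _ _ _ eq] pqs by auto
  then have "{a, b} \<subseteq> {p, q, s}" "{c, d} \<subseteq> {p, q, s}" by auto
  then have ab: "(a, b) \<in> {(p, q), (p, s), (q, s)}" and cd: "(c, d) \<in> {(p, q), (p, s), (q, s)}"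
    using pqs assms(3,4) by auto
  have "transpose a b (transpose c d p) = q" "transpose a b (transpose c d q) = s"
    "transpose a b (transpose c d s) = p"
    using eq[THEN fun_cong, of p] eq[THEN fun_cong, of q] eq[THEN fun_cong, of s] pqs by auto
  moreover have "p \<noteq> q" "q \<noteq> p" "p \<noteq> s" "s \<noteq> p" "q \<noteq> s" "s \<noteq> q" using pqs by auto
  ultimately show ?thesis
    using ab cd by (elim insertE singletonE emptyE) (simp_all add: transpose_def)
qed

lemma transpose_comp_eq_swap:
  assumes "transpose a b \<circ> transpose c d = transpose i j \<circ> transpose k l"
  shows "transpose c d \<circ> transpose a b = transpose k l \<circ> transpose i j"
proof
  fix y
  have "transpose a b (transpose c d (transpose k l (transpose i j y))) = y"
    using assms[THEN fun_cong, of "transpose k l (transpose i j y)"] by simp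
  then show "(transpose c d \<circ> transpose a b) y = (transpose k l \<circ> transpose i j) y"
    by (metis comp_apply transpose_involutory)
qed

lemma transpose_comp_cycle_eqs:
  assumes "p \<noteq> q" "q \<noteq> s" "p \<noteq> s"
  shows "transpose q s \<circ> transpose p s = transpose p q \<circ> transpose q s"
    and "transpose p s \<circ> transpose p q = transpose p q \<circ> transpose q s"
  using assms by (simp_all add: fun_eq_iff transpose_def)

lemma transpose_comp_eq_cycle_iff:
  fixes a b c d p q s :: nat
  assumes "p < q" "q < s" "a < b" "c < d"
  shows "transpose a b \<circ> transpose c d = transpose p q \<circ> transpose q s
           \<longleftrightarrow> (a, b, c, d) \<in> {(p, q, q, s), (q, s, p, s), (p, s, p, q)}"
proof
  assume "(a, b, c, d) \<in> {(p, q, q, s), (q, s, p, s), (p, s, p, q)}"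
  then show "transpose a b \<circ> transpose c d = transpose p q \<circ> transpose q s"
    using transpose_comp_cycle_eqs[of p q s] assms(1,2) by (elim insertE singletonE emptyE) simp_all
qed (rule transpose_comp_eq_cycle[OF assms])

lemma transpose_comp_eq_cycle'_iff:
  fixes a b c d p q s :: nat
  assumes "p < q" "q < s" "a < b" "c < d"
  shows "transpose a b \<circ> transpose c d = transpose q s \<circ> transpose p q
           \<longleftrightarrow> (a, b, c, d) \<in> {(q, s, p, q), (p, q, p, s), (p, s, q, s)}"
proof -
  have "transpose a b \<circ> transpose c d = transpose q s \<circ> transpose p q
          \<longleftrightarrow> transpose c d \<circ> transpose a b = transpose p q \<circ> transpose q s"
    using transpose_comp_eq_swap by metis
  also have "\<dots> \<longleftrightarrow> (c, d, a, b) \<in> {(p, q, q, s), (q, s, p, s), (p, s, p, q)}"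
    by (rule transpose_comp_eq_cycle_iff[OF assms(1,2,4,3)])
  finally show ?thesis by auto
qed

section \<open>Chains of two reflections with a common endpoint\<close>

text \<open>The change of the translation part \<open>H\<close> under one reflection (\<open>refl_orbit_pt\<close>) and under
  the chain of reflections in \<open>\<epsilon>\<^sub>a - \<epsilon>\<^sub>b\<close>, \<open>\<epsilon>\<^sub>c - \<epsilon>\<^sub>d\<close> (\<open>refl2_orbit_pt\<close>).\<close>

definition step_shift :: "(nat \<Rightarrow> nat) \<Rightarrow> nat \<Rightarrow> nat \<Rightarrow> nat \<Rightarrow> int" where
  "step_shift \<tau> i j u = of_bool (\<tau> j < \<tau> i) * (of_bool (u = i) - of_bool (u = j))"

definition chain_shift :: "(nat \<Rightarrow> nat) \<Rightarrow> nat \<Rightarrow> nat \<Rightarrow> nat \<Rightarrow> nat \<Rightarrow> nat \<Rightarrow> int" where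
  "chain_shift \<tau> a b c d u = step_shift \<tau> a b u + step_shift (\<tau> \<circ> transpose a b) c d u"

lemma chain_shift_outside: "u \<notin> {a, b, c, d} \<Longrightarrow> chain_shift \<tau> a b c d u = 0"
  by (simp add: chain_shift_def step_shift_def)

lemma chain_shift_eq_iff:
  assumes "{a, b, c, d, a', b', c', d'} \<subseteq> A"
  shows "chain_shift \<tau> a b c d = chain_shift \<tau>' a' b' c' d'
           \<longleftrightarrow> (\<forall>u\<in>A. chain_shift \<tau> a b c d u = chain_shift \<tau>' a' b' c' d' u)"
proof (intro iffI ext)
  fix u assume on_A: "\<forall>u\<in>A. chain_shift \<tau> a b c d u = chain_shift \<tau>' a' b' c' d' u"
  show "chain_shift \<tau> a b c d u = chain_shift \<tau>' a' b' c' d' u"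
  proof (cases "u \<in> A")
    case False
    then have "u \<notin> {a, b, c, d}" "u \<notin> {a', b', c', d'}" using assms by auto
    then show ?thesis by (metis chain_shift_outside)
  qed (use on_A in blast)
qed simp

lemma nat_three_orders:
  fixes x y z :: nat
  assumes "x \<noteq> y" "y \<noteq> z" "x \<noteq> z"
  obtains "x < y" "y < z" | "x < z" "z < y" | "y < x" "x < z" | "y < z" "z < x" | "z < x" "x < y"
    | "z < y" "y < x"
  using assms by (metis linorder_neqE_nat)

text \<open>\<open>(p q)(q s) = (q s)(p s) = (p s)(p q)\<close> are the three factorisations of one 3-cycle,
  and \<open>(q s)(p q) = (p q)(p s) = (p s)(q s)\<close> those of its inverse.\<close>

lemma chain_shift_cycle:
  fixes \<tau> :: "nat \<Rightarrow> nat" and p q s :: nat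
  assumes pqs: "p < q" "q < s" and "\<tau> p \<noteq> \<tau> q" "\<tau> q \<noteq> \<tau> s" "\<tau> p \<noteq> \<tau> s"
  shows "chain_shift \<tau> q s p s \<noteq> chain_shift \<tau> p s p q"
    and "chain_shift \<tau> q s p s = chain_shift \<tau> p q q s \<longleftrightarrow> chain_shift \<tau> p s p q \<noteq> chain_shift \<tau> p q q s"
    and "excess_set (\<tau> \<circ> transpose q s) p s = {} \<Longrightarrow> chain_shift \<tau> q s p s = chain_shift \<tau> p q q s"
    and "excess_set \<tau> p s = {} \<Longrightarrow> chain_shift \<tau> p s p q = chain_shift \<tau> p q q s"
proof -
  have ne: "p \<noteq> q" "q \<noteq> p" "p \<noteq> s" "s \<noteq> p" "q \<noteq> s" "s \<noteq> q" using pqs by auto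
  note eval = chain_shift_eq_iff[where A = "{p, q, s}"] chain_shift_def step_shift_def ne
  show "chain_shift \<tau> q s p s \<noteq> chain_shift \<tau> p s p q"
       "chain_shift \<tau> q s p s = chain_shift \<tau> p q q s \<longleftrightarrow> chain_shift \<tau> p s p q \<noteq> chain_shift \<tau> p q q s"
    by (rule nat_three_orders[OF assms(3-5)]; simp add: eval)+
  show "chain_shift \<tau> q s p s = chain_shift \<tau> p q q s" if "excess_set (\<tau> \<circ> transpose q s) p s = {}"
    by (rule nat_three_orders[OF assms(3-5)])
      (use excess_set_emptyD[OF that pqs] in \<open>simp add: eval between_set_def pqs\<close>)+
  show "chain_shift \<tau> p s p q = chain_shift \<tau> p q q s" if "excess_set \<tau> p s = {}"
    by (rule nat_three_orders[OF assms(3-5)])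
      (use excess_set_emptyD[OF that pqs] in \<open>simp add: eval between_set_def pqs\<close>)+
qed

lemma chain_shift_cycle':
  fixes \<tau> :: "nat \<Rightarrow> nat" and p q s :: nat
  assumes pqs: "p < q" "q < s" and "\<tau> p \<noteq> \<tau> q" "\<tau> q \<noteq> \<tau> s" "\<tau> p \<noteq> \<tau> s"
  shows "chain_shift \<tau> p q p s \<noteq> chain_shift \<tau> p s q s"
    and "chain_shift \<tau> p q p s = chain_shift \<tau> q s p q \<longleftrightarrow> chain_shift \<tau> p s q s \<noteq> chain_shift \<tau> q s p q"
    and "excess_set (\<tau> \<circ> transpose p q) p s = {} \<Longrightarrow> chain_shift \<tau> p q p s = chain_shift \<tau> q s p q"
    and "excess_set \<tau> p s = {} \<Longrightarrow> chain_shift \<tau> p s q s = chain_shift \<tau> q s p q"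
proof -
  have ne: "p \<noteq> q" "q \<noteq> p" "p \<noteq> s" "s \<noteq> p" "q \<noteq> s" "s \<noteq> q" using pqs by auto
  note eval = chain_shift_eq_iff[where A = "{p, q, s}"] chain_shift_def step_shift_def ne
  show "chain_shift \<tau> p q p s \<noteq> chain_shift \<tau> p s q s"
       "chain_shift \<tau> p q p s = chain_shift \<tau> q s p q \<longleftrightarrow> chain_shift \<tau> p s q s \<noteq> chain_shift \<tau> q s p q"
    by (rule nat_three_orders[OF assms(3-5)]; simp add: eval)+
  show "chain_shift \<tau> p q p s = chain_shift \<tau> q s p q" if "excess_set (\<tau> \<circ> transpose p q) p s = {}"
    by (rule nat_three_orders[OF assms(3-5)])
      (use excess_set_emptyD[OF that pqs] in \<open>simp add: eval between_set_def pqs\<close>)+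
  show "chain_shift \<tau> p s q s = chain_shift \<tau> q s p q" if "excess_set \<tau> p s = {}"
    by (rule nat_three_orders[OF assms(3-5)])
      (use excess_set_emptyD[OF that pqs] in \<open>simp add: eval between_set_def pqs\<close>)+
qed

text \<open>The chain \<open>(a, b), (c, d)\<close> ends where the chain \<open>(i, j), (k, l)\<close> does, see
  \<open>refl2_orbit_pt_eq_iff\<close>.\<close>

definition same_endpoint ::
    "nat \<Rightarrow> (nat \<Rightarrow> nat) \<Rightarrow> nat \<Rightarrow> nat \<Rightarrow> nat \<Rightarrow> nat \<Rightarrow> nat \<Rightarrow> nat \<Rightarrow> nat \<Rightarrow> nat \<Rightarrow> bool" where
  "same_endpoint n \<tau> i j k l a b c d \<longleftrightarrow>
     1 \<le> a \<and> a < b \<and> b \<le> n \<and> 1 \<le> c \<and> c < d \<and> d \<le> n \<and>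
     transpose a b \<circ> transpose c d = transpose i j \<circ> transpose k l \<and>
     chain_shift \<tau> a b c d = chain_shift \<tau> i j k l"

lemma ex1_other_of_three:
  assumes "x \<in> {x1, x2, x3}" "distinct [x1, x2, x3]"
    and "f x2 \<noteq> f x3" "f x1 = f x2 \<longleftrightarrow> f x1 \<noteq> f x3"
    and "x = x2 \<Longrightarrow> f x2 = f x1" "x = x3 \<Longrightarrow> f x3 = f x1"
  shows "\<exists>!y. y \<in> {x1, x2, x3} \<and> y \<noteq> x \<and> f y = f x"
proof -
  have "x = x1 \<and> f x2 = f x1 \<or> x = x1 \<and> f x3 = f x1 \<or> x = x2 \<or> x = x3"
    using assms(1,4) by auto
  then obtain w where "w \<in> {x1, x2, x3}" "w \<noteq> x" "f w = f x"
    and "\<And>y. y \<in> {x1, x2, x3} \<Longrightarrow> y \<noteq> x \<Longrightarrow> f y = f x \<Longrightarrow> y = w"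
  proof (elim disjE conjE)
    assume "x = x1" "f x2 = f x1"
    then show thesis using assms(2-4) by (intro that[of x2]) auto
  next
    assume "x = x1" "f x3 = f x1"
    then show thesis using assms(2-4) by (intro that[of x3]) auto
  next
    assume "x = x2"
    then show thesis using assms(2,3,5) by (intro that[of x1]) auto
  next
    assume "x = x3"
    then show thesis using assms(2,3,6) by (intro that[of x1]) auto
  qed
  then show ?thesis by blast
qed

lemma other_same_endpoint_eq:
  assumes factorizations: "\<And>a b c d. a < b \<Longrightarrow> c < d \<Longrightarrow>
      transpose a b \<circ> transpose c d = transpose i j \<circ> transpose k l \<longleftrightarrow> (a, b, c, d) \<in> F"
    and "(i, j, k, l) \<in> F"
    and F_range: "\<And>a b c d. (a, b, c, d) \<in> F \<Longrightarrow> 1 \<le> a \<and> a < b \<and> b \<le> n \<and> 1 \<le> c \<and> c < d \<and> d \<le> n"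
    and F_first: "\<And>a b c d c' d'. (a, b, c, d) \<in> F \<Longrightarrow> (a, b, c', d') \<in> F \<Longrightarrow> (c, d) = (c', d')"
  shows "(\<lambda>(a, b, c, d). (a, b) \<noteq> (i, j) \<and> same_endpoint n \<tau> i j k l a b c d)
           = (\<lambda>x. x \<in> F \<and> x \<noteq> (i, j, k, l)
                  \<and> (case x of (a, b, c, d) \<Rightarrow> chain_shift \<tau> a b c d) = chain_shift \<tau> i j k l)"
proof (intro ext, clarify)
  fix a b c d
  show "((a, b) \<noteq> (i, j) \<and> same_endpoint n \<tau> i j k l a b c d)
          \<longleftrightarrow> (a, b, c, d) \<in> F \<and> (a, b, c, d) \<noteq> (i, j, k, l)
              \<and> chain_shift \<tau> a b c d = chain_shift \<tau> i j k l"
  proof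
    assume "(a, b) \<noteq> (i, j) \<and> same_endpoint n \<tau> i j k l a b c d"
    then show "(a, b, c, d) \<in> F \<and> (a, b, c, d) \<noteq> (i, j, k, l)
                 \<and> chain_shift \<tau> a b c d = chain_shift \<tau> i j k l"
      using factorizations unfolding same_endpoint_def by blast
  next
    assume R: "(a, b, c, d) \<in> F \<and> (a, b, c, d) \<noteq> (i, j, k, l)
                 \<and> chain_shift \<tau> a b c d = chain_shift \<tau> i j k l"
    then have "(a, b) \<noteq> (i, j)" using F_first \<open>(i, j, k, l) \<in> F\<close> by blast
    then show "(a, b) \<noteq> (i, j) \<and> same_endpoint n \<tau> i j k l a b c d"
      using R F_range[of a b c d] factorizations[of a b c d] unfolding same_endpoint_def by blast
  qed
qed

lemma unique_other_chain_disjoint: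
  assumes "1 \<le> i" "i < j" "j \<le> n" "1 \<le> k" "k < l" "l \<le> n" "{i, j} \<inter> {k, l} = {}"
  shows "\<exists>!(a, b, c, d). (a, b) \<noteq> (i, j) \<and> same_endpoint n \<tau> i j k l a b c d"
proof -
  let ?F = "{(i, j, k, l), (k, l, i, j)}"
  have "(\<lambda>(a, b, c, d). (a, b) \<noteq> (i, j) \<and> same_endpoint n \<tau> i j k l a b c d)
          = (\<lambda>x. x \<in> ?F \<and> x \<noteq> (i, j, k, l)
                 \<and> (case x of (a, b, c, d) \<Rightarrow> chain_shift \<tau> a b c d) = chain_shift \<tau> i j k l)"
    by (rule other_same_endpoint_eq[OF transpose_comp_eq_disjoint_iff[OF assms(2,5,7)]])
      (use assms in auto)
  moreover have "step_shift (\<tau> \<circ> transpose k l) i j = step_shift \<tau> i j"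
    "step_shift (\<tau> \<circ> transpose i j) k l = step_shift \<tau> k l"
    using assms(7) by (auto simp: fun_eq_iff step_shift_def)
  then have "chain_shift \<tau> k l i j = chain_shift \<tau> i j k l"
    by (simp add: fun_eq_iff chain_shift_def)
  moreover have "(k, l, i, j) \<noteq> (i, j, k, l)" using assms(7) by auto
  ultimately show ?thesis by auto
qed

lemma unique_other_chain_cycle:
  assumes "inj \<tau>" "1 \<le> p" "p < q" "q < s" "s \<le> n"
    and ijkl: "(i, j, k, l) \<in> {(p, q, q, s), (q, s, p, s), (p, s, p, q)}"
    and "excess_set \<tau> i j = {}" "excess_set (\<tau> \<circ> transpose i j) k l = {}"
  shows "\<exists>!(a, b, c, d). (a, b) \<noteq> (i, j) \<and> same_endpoint n \<tau> i j k l a b c d"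
proof -
  let ?F = "{(p, q, q, s), (q, s, p, s), (p, s, p, q)}"
  let ?shift = "\<lambda>(a, b, c, d). chain_shift \<tau> a b c d"
  have ne: "p \<noteq> q" "q \<noteq> s" "p \<noteq> s" using assms(3,4) by auto
  have "transpose i j \<circ> transpose k l = transpose p q \<circ> transpose q s"
    using transpose_comp_eq_cycle_iff[OF assms(3,4)] ijkl assms(3,4) by auto
  then have "(\<lambda>(a, b, c, d). (a, b) \<noteq> (i, j) \<and> same_endpoint n \<tau> i j k l a b c d)
               = (\<lambda>x. x \<in> ?F \<and> x \<noteq> (i, j, k, l) \<and> ?shift x = chain_shift \<tau> i j k l)"
    using transpose_comp_eq_cycle_iff[OF assms(3,4)] ijkl
    by (intro other_same_endpoint_eq) (use assms(2-5) ne in auto)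
  moreover have "\<exists>!x. x \<in> ?F \<and> x \<noteq> (i, j, k, l) \<and> ?shift x = ?shift (i, j, k, l)"
  proof (rule ex1_other_of_three[OF ijkl, where f = ?shift])
    have "\<tau> p \<noteq> \<tau> q" "\<tau> q \<noteq> \<tau> s" "\<tau> p \<noteq> \<tau> s" using ne assms(1) by (auto dest: injD)
    note shifts = chain_shift_cycle[OF assms(3,4) this]
    show "distinct [(p, q, q, s), (q, s, p, s), (p, s, p, q)]" using ne by simp
    show "?shift (q, s, p, s) \<noteq> ?shift (p, s, p, q)"
      "?shift (p, q, q, s) = ?shift (q, s, p, s) \<longleftrightarrow> ?shift (p, q, q, s) \<noteq> ?shift (p, s, p, q)"
      using shifts(1,2) unfolding prod.case by (blast, metis)
    show "?shift (q, s, p, s) = ?shift (p, q, q, s)" if "(i, j, k, l) = (q, s, p, s)"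
      using shifts(3) assms(8) that unfolding prod.case by blast
    show "?shift (p, s, p, q) = ?shift (p, q, q, s)" if "(i, j, k, l) = (p, s, p, q)"
      using shifts(4) assms(7) that unfolding prod.case by blast
  qed
  ultimately show ?thesis by simp
qed

lemma unique_other_chain_cycle':
  assumes "inj \<tau>" "1 \<le> p" "p < q" "q < s" "s \<le> n"
    and ijkl: "(i, j, k, l) \<in> {(q, s, p, q), (p, q, p, s), (p, s, q, s)}"
    and "excess_set \<tau> i j = {}" "excess_set (\<tau> \<circ> transpose i j) k l = {}"
  shows "\<exists>!(a, b, c, d). (a, b) \<noteq> (i, j) \<and> same_endpoint n \<tau> i j k l a b c d"
proof -
  let ?F = "{(q, s, p, q), (p, q, p, s), (p, s, q, s)}"
  let ?shift = "\<lambda>(a, b, c, d). chain_shift \<tau> a b c d"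
  have ne: "p \<noteq> q" "q \<noteq> s" "p \<noteq> s" using assms(3,4) by auto
  have "transpose i j \<circ> transpose k l = transpose q s \<circ> transpose p q"
    using transpose_comp_eq_cycle'_iff[OF assms(3,4)] ijkl assms(3,4) by auto
  then have "(\<lambda>(a, b, c, d). (a, b) \<noteq> (i, j) \<and> same_endpoint n \<tau> i j k l a b c d)
               = (\<lambda>x. x \<in> ?F \<and> x \<noteq> (i, j, k, l) \<and> ?shift x = chain_shift \<tau> i j k l)"
    using transpose_comp_eq_cycle'_iff[OF assms(3,4)] ijkl
    by (intro other_same_endpoint_eq) (use assms(2-5) ne in auto)
  moreover have "\<exists>!x. x \<in> ?F \<and> x \<noteq> (i, j, k, l) \<and> ?shift x = ?shift (i, j, k, l)"
  proof (rule ex1_other_of_three[OF ijkl, where f = ?shift])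
    have "\<tau> p \<noteq> \<tau> q" "\<tau> q \<noteq> \<tau> s" "\<tau> p \<noteq> \<tau> s" using ne assms(1) by (auto dest: injD)
    note shifts = chain_shift_cycle'[OF assms(3,4) this]
    show "distinct [(q, s, p, q), (p, q, p, s), (p, s, q, s)]" using ne by simp
    show "?shift (p, q, p, s) \<noteq> ?shift (p, s, q, s)"
      "?shift (q, s, p, q) = ?shift (p, q, p, s) \<longleftrightarrow> ?shift (q, s, p, q) \<noteq> ?shift (p, s, q, s)"
      using shifts(1,2) unfolding prod.case by (blast, metis)
    show "?shift (p, q, p, s) = ?shift (q, s, p, q)" if "(i, j, k, l) = (p, q, p, s)"
      using shifts(3) assms(8) that unfolding prod.case by blast
    show "?shift (p, s, q, s) = ?shift (q, s, p, q)" if "(i, j, k, l) = (p, s, q, s)"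
      using shifts(4) assms(7) that unfolding prod.case by blast
  qed
  ultimately show ?thesis by simp
qed

lemma unique_other_chain:
  assumes "inj \<tau>" "1 \<le> i" "i < j" "j \<le> n" "1 \<le> k" "k < l" "l \<le> n" "(i, j) \<noteq> (k, l)"
    and "excess_set \<tau> i j = {}" "excess_set (\<tau> \<circ> transpose i j) k l = {}"
  shows "\<exists>!(a, b, c, d). (a, b) \<noteq> (i, j) \<and> same_endpoint n \<tau> i j k l a b c d"
proof -
  consider "i \<noteq> k" "i \<noteq> l" "j \<noteq> k" "j \<noteq> l" | "j = k" | "l = i" | "i = k" "j < l" | "i = k" "l < j"
    | "j = l" "i < k" | "j = l" "k < i"
    using assms(8) by (metis linorder_neqE_nat prod.inject)
  then show ?thesis
  proof cases
    case 1
    then have "{i, j} \<inter> {k, l} = {}" by auto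
    from unique_other_chain_disjoint[OF assms(2-7) this] show ?thesis .
  next
    case 2 show ?thesis by (rule unique_other_chain_cycle[of \<tau> i j l]) (use 2 assms in auto)
  next
    case 3 show ?thesis by (rule unique_other_chain_cycle'[of \<tau> k i j]) (use 3 assms in auto)
  next
    case 4 show ?thesis by (rule unique_other_chain_cycle'[of \<tau> i j l]) (use 4 assms in auto)
  next
    case 5 show ?thesis by (rule unique_other_chain_cycle[of \<tau> i l j]) (use 5 assms in auto)
  next
    case 6 show ?thesis by (rule unique_other_chain_cycle'[of \<tau> i k j]) (use 6 assms in auto)
  next
    case 7 show ?thesis by (rule unique_other_chain_cycle[of \<tau> k i j]) (use 7 assms in auto)
  qed
qed

lemma ex1_posroot_pairI:
  assumes P_iff_Q: "\<And>a b c d. 1 \<le> a \<Longrightarrow> a < b \<Longrightarrow> b \<le> n \<Longrightarrow> 1 \<le> c \<Longrightarrow> c < d \<Longrightarrow> d \<le> n \<Longrightarrow>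
        P (eps_diff a b) (eps_diff c d) \<longleftrightarrow> Q a b c d"
    and Q_range: "\<And>a b c d. Q a b c d \<Longrightarrow> 1 \<le> a \<and> a < b \<and> b \<le> n \<and> 1 \<le> c \<and> c < d \<and> d \<le> n"
    and "\<exists>!(a, b, c, d). Q a b c d"
  shows "\<exists>!(\<alpha>, \<beta>). posroot n \<alpha> \<and> posroot n \<beta> \<and> P \<alpha> \<beta>"
proof -
  from assms(3) obtain x where x: "case x of (a, b, c, d) \<Rightarrow> Q a b c d"
    and unique_x: "\<And>y. (case y of (a, b, c, d) \<Rightarrow> Q a b c d) \<Longrightarrow> y = x" by (rule ex1E) blast
  obtain a b c d where "x = (a, b, c, d)" by (cases x)
  then have Q: "Q a b c d" using x by simp
  have unique: "(a', b', c', d') = (a, b, c, d)" if "Q a' b' c' d'" for a' b' c' d'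
    using unique_x[of "(a', b', c', d')"] that \<open>x = (a, b, c, d)\<close> by simp
  show ?thesis
  proof (rule ex1I[of _ "(eps_diff a b, eps_diff c d)"])
    show "case (eps_diff a b, eps_diff c d) of (\<alpha>, \<beta>) \<Rightarrow> posroot n \<alpha> \<and> posroot n \<beta> \<and> P \<alpha> \<beta>"
      using Q Q_range[OF Q] P_iff_Q[of a b c d] unfolding posroot_iff by auto
  next
    fix x assume "case x of (\<alpha>, \<beta>) \<Rightarrow> posroot n \<alpha> \<and> posroot n \<beta> \<and> P \<alpha> \<beta>"
    then obtain \<alpha> \<beta> where x: "x = (\<alpha>, \<beta>)" and "posroot n \<alpha>" "posroot n \<beta>" "P \<alpha> \<beta>"
      by (cases x) auto
    then obtain a' b' c' d' where range: "1 \<le> a'" "a' < b'" "b' \<le> n" "1 \<le> c'" "c' < d'" "d' \<le> n"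
      and \<alpha>\<beta>: "\<alpha> = eps_diff a' b'" "\<beta> = eps_diff c' d'" unfolding posroot_iff by blast
    then have "Q a' b' c' d'" using P_iff_Q[OF range] \<open>P \<alpha> \<beta>\<close> by simp
    then show "x = (eps_diff a b, eps_diff c d)" using unique x \<alpha>\<beta> by simp
  qed
qed

section \<open>The orbit of an alcove weight\<close>

text \<open>\<open>\<Lambda>\<close> lies in the interior of the fundamental alcove of level \<open>r\<close>.\<close>

locale alcove_weight =
  fixes n r :: nat and \<Lambda> :: "nat \<Rightarrow> real"
  assumes r_pos: "0 < r" and in_P: "in_P n \<Lambda>"
    and dominant: "\<forall>i. 1 \<le> i \<and> i \<le> n - 1 \<longrightarrow> ip n \<Lambda> (sroot i) > 0"
    and level: "ip n \<Lambda> (theta n) < real r"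
begin

lemma Lam_diff_int:
  assumes "p \<in> {1..n}" "q \<in> {1..n}"
  obtains z where "\<Lambda> p - \<Lambda> q = of_int z"
proof -
  obtain a :: "nat \<Rightarrow> int" where a: "\<Lambda> = (\<lambda>k. \<Sum>i=1..n. of_int (a i) * epsbar n i k)"
    using in_P unfolding in_P_def by blast
  have "\<Lambda> k = of_int (a k) - (\<Sum>i=1..n. of_int (a i)) / real n" if "k \<in> {1..n}" for k
  proof -
    have "(\<Sum>j=1..n. eps j k) = 1" using that by (simp add: eps_def)
    then have "\<Lambda> k = (\<Sum>i=1..n. of_int (a i) * eps k i) - (\<Sum>i=1..n. of_int (a i)) / real n"
      unfolding a epsbar_def
      by (simp add: right_diff_distrib sum_subtractf sum_divide_distrib eps_def eq_commute[of k])
    then show ?thesis using that by (simp add: sum_mult_eps)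
  qed
  then have "\<Lambda> p - \<Lambda> q = of_int (a p - a q)" using assms by simp
  then show thesis by (rule that)
qed

lemma Lam_strict_antimono:
  assumes "1 \<le> p" "p < q" "q \<le> n"
  shows "\<Lambda> q < \<Lambda> p"
  using assms
proof (induction q)
  case (Suc q)
  have "ip n \<Lambda> (sroot q) = \<Lambda> q - \<Lambda> (Suc q)"
    using ip_eps_diff[of q n "Suc q" \<Lambda>] Suc.prems unfolding sroot_def eps_diff_def by simp
  moreover have "1 \<le> q" "q \<le> n - 1" using Suc.prems by auto
  ultimately have "\<Lambda> (Suc q) < \<Lambda> q" using dominant by auto
  then show ?case using Suc by (cases "p = q") auto
qed simp

lemma Lam_diff_less_r:
  assumes "p \<in> {1..n}" "q \<in> {1..n}"
  shows "\<Lambda> p - \<Lambda> q < real r"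
proof -
  have "ip n \<Lambda> (theta n) = \<Lambda> 1 - \<Lambda> n" using assms by (simp add: theta_eq_eps_diff ip_eps_diff)
  moreover have "\<Lambda> p \<le> \<Lambda> 1" "\<Lambda> n \<le> \<Lambda> q"
    using Lam_strict_antimono[of 1 p] Lam_strict_antimono[of q n] assms by fastforce+
  ultimately show ?thesis using level by simp
qed

text \<open>The element \<open>\<sigma>\<Lambda> + r\<gamma>\<close> of \<open>W\<Lambda>\<close> is \<open>orbit_pt (inv \<sigma>) H\<close> with \<open>H\<close> the coordinates of
  \<open>\<gamma>\<close>, see \<open>WLam_repr_eq_orbit_pt\<close>.\<close>

definition orbit_pt :: "(nat \<Rightarrow> nat) \<Rightarrow> (nat \<Rightarrow> int) \<Rightarrow> nat \<Rightarrow> real" where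
  "orbit_pt \<tau> H = (\<lambda>k. \<Lambda> (\<tau> k) + real r * of_int (H k))"

lemma WLam_repr_eq_orbit_pt:
  "(\<lambda>k. act \<sigma> \<Lambda> k + real r * rootcomb n c k) = orbit_pt (inv \<sigma>) (rootcomb_coord n c)"
  unfolding orbit_pt_def act_def by (simp add: rootcomb_eq_coord)

lemma in_WLamE:
  assumes "in_WLam n r \<Lambda> l"
  obtains \<tau> c where "\<tau> permutes {1..n}" "l = orbit_pt \<tau> (rootcomb_coord n c)"
  using assms permutes_inv unfolding in_WLam_def WLam_repr_eq_orbit_pt by blast

lemma orbit_pt_eqD:
  assumes "\<tau>1 permutes {1..n}" "\<tau>2 permutes {1..n}" "k \<in> {1..n}"
    and "orbit_pt \<tau>1 H1 k = orbit_pt \<tau>2 H2 k"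
  shows "\<tau>1 k = \<tau>2 k" "H1 k = H2 k"
proof -
  have in_range: "\<tau>1 k \<in> {1..n}" "\<tau>2 k \<in> {1..n}"
    using permutes_in_image[OF assms(1)] permutes_in_image[OF assms(2)] assms(3) by blast+
  have eq: "\<Lambda> (\<tau>1 k) - \<Lambda> (\<tau>2 k) = real r * of_int (H2 k - H1 k)"
    using assms(4) unfolding orbit_pt_def by (simp add: algebra_simps)
  show "\<tau>1 k = \<tau>2 k"
  proof (rule ccontr)
    assume "\<tau>1 k \<noteq> \<tau>2 k"
    then have "\<Lambda> (\<tau>1 k) \<noteq> \<Lambda> (\<tau>2 k)"
      using Lam_strict_antimono in_range by (metis atLeastAtMost_iff linorder_neqE_nat less_irrefl)
    then have "H2 k - H1 k \<noteq> 0" using eq by auto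
    then have "(1::real) \<le> \<bar>of_int (H2 k - H1 k)\<bar>" by linarith
    then have "real r * 1 \<le> \<bar>real r * of_int (H2 k - H1 k)\<bar>"
      using mult_left_mono[of 1 _ "real r"] by (simp add: abs_mult)
    moreover have "\<bar>\<Lambda> (\<tau>1 k) - \<Lambda> (\<tau>2 k)\<bar> < real r"
      using Lam_diff_less_r in_range by (simp add: abs_less_iff)
    ultimately show False using eq by simp
  qed
  then show "H1 k = H2 k" using eq r_pos by simp
qed

lemma orbit_pt_eq_iff:
  assumes "\<tau>1 permutes {1..n}" "\<tau>2 permutes {1..n}" "\<And>k. k \<notin> {1..n} \<Longrightarrow> H1 k = H2 k"
  shows "orbit_pt \<tau>1 H1 = orbit_pt \<tau>2 H2 \<longleftrightarrow> \<tau>1 = \<tau>2 \<and> H1 = H2"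
proof
  assume eq: "orbit_pt \<tau>1 H1 = orbit_pt \<tau>2 H2"
  have "\<tau>1 k = \<tau>2 k \<and> H1 k = H2 k" for k
    using orbit_pt_eqD[OF assms(1,2), of k H1 H2] eq assms permutes_not_in by metis
  then show "\<tau>1 = \<tau>2 \<and> H1 = H2" by auto
qed simp

lemma mval_orbit_pt:
  assumes \<tau>: "\<tau> permutes {1..n}" and "i \<in> {1..n}" "j \<in> {1..n}" "i \<noteq> j"
  shows "of_int (mval n r (orbit_pt \<tau> H) (eps_diff i j))
           = \<Lambda> (\<tau> i) - \<Lambda> (\<tau> j) + real r * of_bool (\<tau> j < \<tau> i)"
proof -
  have in_range: "\<tau> i \<in> {1..n}" "\<tau> j \<in> {1..n}" using assms(2,3) permutes_in_image[OF \<tau>] by blast+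
  have "\<tau> i \<noteq> \<tau> j" using assms(4) permutes_inj[OF \<tau>] by (auto dest: injD)
  obtain z where z: "\<Lambda> (\<tau> i) - \<Lambda> (\<tau> j) = of_int z" using Lam_diff_int[OF in_range] .
  have "real_of_int z < real_of_int (int r)" "real_of_int (- z) < real_of_int (int r)"
    using Lam_diff_less_r in_range z by fastforce+
  then have bounds: "z < int r" "- z < int r" by (simp_all only: of_int_less_iff)
  have "\<tau> j < \<tau> i \<longleftrightarrow> \<Lambda> (\<tau> i) < \<Lambda> (\<tau> j)" "\<Lambda> (\<tau> i) \<noteq> \<Lambda> (\<tau> j)"
    using Lam_strict_antimono in_range \<open>\<tau> i \<noteq> \<tau> j\<close>
    by (metis atLeastAtMost_iff linorder_neqE_nat order_less_asym)+
  then have sign: "\<tau> j < \<tau> i \<longleftrightarrow> z < 0" "z \<noteq> 0" using z by auto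
  have "mval n r (orbit_pt \<tau> H) (eps_diff i j) = z + int r * of_bool (\<tau> j < \<tau> i)"
  proof (rule mval_eqI)
    show "ip n (orbit_pt \<tau> H) (eps_diff i j) = of_int (z + int r * (H i - H j))"
      using assms(2,3) z by (simp add: ip_eps_diff orbit_pt_def algebra_simps)
    show "int r dvd z + int r * (H i - H j) - (z + int r * of_bool (\<tau> j < \<tau> i))"
      by (simp add: algebra_simps flip: right_diff_distrib)
    show "0 < z + int r * of_bool (\<tau> j < \<tau> i)" "z + int r * of_bool (\<tau> j < \<tau> i) < int r"
      using bounds sign by auto
  qed
  then show ?thesis using z by simp
qed

lemma refl_orbit_pt:
  assumes "\<tau> permutes {1..n}" "i \<in> {1..n}" "j \<in> {1..n}" "i \<noteq> j"
  shows "refl n r (orbit_pt \<tau> H) (eps_diff i j)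
           = orbit_pt (\<tau> \<circ> transpose i j) (\<lambda>u. H u - step_shift \<tau> i j u)"
  using assms(4) unfolding refl_def mval_orbit_pt[OF assms]
  by (auto simp: fun_eq_iff orbit_pt_def eps_diff_def eps_def step_shift_def algebra_simps)

lemma refl_orbit_pt_coord:
  assumes "\<tau> permutes {1..n}" "1 \<le> i" "i < j" "j \<le> n"
  shows "refl n r (orbit_pt \<tau> (rootcomb_coord n c)) (eps_diff i j)
           = orbit_pt (\<tau> \<circ> transpose i j) (rootcomb_coord n (coeff_shift c i j (of_bool (\<tau> j < \<tau> i))))"
proof -
  have "rootcomb_coord n (coeff_shift c i j (of_bool (\<tau> j < \<tau> i)))
          = (\<lambda>u. rootcomb_coord n c u - step_shift \<tau> i j u)"
    by (simp add: fun_eq_iff rootcomb_coord_coeff_shift[OF assms(2-4)] step_shift_def)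
  then show ?thesis using refl_orbit_pt[OF assms(1), of i j] assms(2-4) by simp
qed

lemma deg_orbit_pt:
  assumes \<tau>: "\<tau> permutes {1..n}"
  shows "deg n r \<Lambda> (orbit_pt \<tau> (rootcomb_coord n c)) = int (perm_len n \<tau>) - 2 * (\<Sum>t=1..n-1. c t)"
  unfolding deg_def
proof (rule the_equality)
  show "\<exists>\<sigma> c'. \<sigma> permutes {1..n} \<and> orbit_pt \<tau> (rootcomb_coord n c) = (\<lambda>k. act \<sigma> \<Lambda> k + real r * rootcomb n c' k)
      \<and> int (perm_len n \<tau>) - 2 * (\<Sum>t=1..n-1. c t) = int (perm_len n \<sigma>) - 2 * (\<Sum>i=1..n-1. c' i)"
    using permutes_inv[OF \<tau>] perm_len_inv[OF \<tau>] permutes_inv_inv[OF \<tau>]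
    by (intro exI[of _ "inv \<tau>"] exI[of _ c]) (simp add: WLam_repr_eq_orbit_pt)
next
  fix d assume "\<exists>\<sigma> c'. \<sigma> permutes {1..n} \<and> orbit_pt \<tau> (rootcomb_coord n c) = (\<lambda>k. act \<sigma> \<Lambda> k + real r * rootcomb n c' k)
      \<and> d = int (perm_len n \<sigma>) - 2 * (\<Sum>i=1..n-1. c' i)"
  then obtain \<sigma> c' where \<sigma>: "\<sigma> permutes {1..n}"
    and eq: "orbit_pt \<tau> (rootcomb_coord n c) = orbit_pt (inv \<sigma>) (rootcomb_coord n c')"
    and d: "d = int (perm_len n \<sigma>) - 2 * (\<Sum>i=1..n-1. c' i)"
    unfolding WLam_repr_eq_orbit_pt by blast
  have "rootcomb_coord n c k = rootcomb_coord n c' k" if "k \<notin> {1..n}" for k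
    using that by (auto simp: rootcomb_coord_def)
  then have "\<tau> = inv \<sigma>" "rootcomb_coord n c = rootcomb_coord n c'"
    using eq orbit_pt_eq_iff[OF \<tau> permutes_inv[OF \<sigma>]] by blast+
  moreover have "(\<Sum>t=1..n-1. c' t) = (\<Sum>t=1..n-1. c t)"
    using rootcomb_coord_inj[of n c c'] calculation(2) by (intro sum.cong) auto
  ultimately show "d = int (perm_len n \<tau>) - 2 * (\<Sum>t=1..n-1. c t)"
    using d perm_len_inv[OF \<sigma>] by simp
qed

lemma deg_refl_orbit_pt:
  assumes \<tau>: "\<tau> permutes {1..n}" and ij: "1 \<le> i" "i < j" "j \<le> n"
  shows "deg n r \<Lambda> (refl n r (orbit_pt \<tau> (rootcomb_coord n c)) (eps_diff i j))
           = deg n r \<Lambda> (orbit_pt \<tau> (rootcomb_coord n c)) + 1 + 2 * int (card (excess_set \<tau> i j))"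
proof -
  show ?thesis
    unfolding refl_orbit_pt_coord[OF assms] deg_orbit_pt[OF \<tau>]
      deg_orbit_pt[OF permutes_comp_transpose[OF assms]] sum_coeff_shift[OF ij]
    using perm_len_transpose_excess[OF assms] by (simp add: algebra_simps)
qed

lemma admissible_orbit_pt_iff:
  assumes "\<tau> permutes {1..n}" "1 \<le> i" "i < j" "j \<le> n"
  shows "admissible n r \<Lambda> (orbit_pt \<tau> (rootcomb_coord n c)) (eps_diff i j) \<longleftrightarrow> excess_set \<tau> i j = {}"
  unfolding admissible_def deg_refl_orbit_pt[OF assms] using finite_excess_set by simp

lemma refl2_orbit_pt:
  assumes \<tau>: "\<tau> permutes {1..n}" and "1 \<le> a" "a < b" "b \<le> n" "1 \<le> c" "c < d" "d \<le> n"
  shows "refl n r (refl n r (orbit_pt \<tau> H) (eps_diff a b)) (eps_diff c d)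
           = orbit_pt (\<tau> \<circ> (transpose a b \<circ> transpose c d)) (\<lambda>u. H u - chain_shift \<tau> a b c d u)"
  using assms permutes_comp_transpose[OF assms(1-4)]
  by (simp add: refl_orbit_pt chain_shift_def comp_assoc algebra_simps)

lemma deg_refl2_orbit_pt:
  assumes \<tau>: "\<tau> permutes {1..n}" and ab: "1 \<le> a" "a < b" "b \<le> n" and cd: "1 \<le> c" "c < d" "d \<le> n"
  shows "deg n r \<Lambda> (refl n r (refl n r (orbit_pt \<tau> (rootcomb_coord n C)) (eps_diff a b)) (eps_diff c d))
           = deg n r \<Lambda> (orbit_pt \<tau> (rootcomb_coord n C)) + 2
             + 2 * int (card (excess_set \<tau> a b)) + 2 * int (card (excess_set (\<tau> \<circ> transpose a b) c d))"
  unfolding refl_orbit_pt_coord[OF \<tau> ab] deg_refl_orbit_pt[OF permutes_comp_transpose[OF \<tau> ab] cd]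
  using deg_refl_orbit_pt[OF \<tau> ab, of C] refl_orbit_pt_coord[OF \<tau> ab, of C] by simp

lemma admissible_refl_orbit_pt_iff:
  assumes \<tau>: "\<tau> permutes {1..n}" and ab: "1 \<le> a" "a < b" "b \<le> n" and cd: "1 \<le> c" "c < d" "d \<le> n"
  shows "admissible n r \<Lambda> (refl n r (orbit_pt \<tau> (rootcomb_coord n C)) (eps_diff a b)) (eps_diff c d)
           \<longleftrightarrow> excess_set (\<tau> \<circ> transpose a b) c d = {}"
  unfolding refl_orbit_pt_coord[OF \<tau> ab] by (rule admissible_orbit_pt_iff[OF permutes_comp_transpose[OF \<tau> ab] cd])

lemma refl2_orbit_pt_eq_iff:
  assumes \<tau>: "\<tau> permutes {1..n}"
    and abcd: "1 \<le> a" "a < b" "b \<le> n" "1 \<le> c" "c < d" "d \<le> n"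
    and ijkl: "1 \<le> i" "i < j" "j \<le> n" "1 \<le> k" "k < l" "l \<le> n"
  shows "refl n r (refl n r (orbit_pt \<tau> H) (eps_diff a b)) (eps_diff c d)
           = refl n r (refl n r (orbit_pt \<tau> H) (eps_diff i j)) (eps_diff k l)
         \<longleftrightarrow> transpose a b \<circ> transpose c d = transpose i j \<circ> transpose k l
             \<and> chain_shift \<tau> a b c d = chain_shift \<tau> i j k l"
proof -
  have perm: "\<tau> \<circ> (transpose a b \<circ> transpose c d) permutes {1..n}"
    "\<tau> \<circ> (transpose i j \<circ> transpose k l) permutes {1..n}"
    using permutes_comp_transpose[OF permutes_comp_transpose[OF \<tau> abcd(1-3)] abcd(4-6)]
      permutes_comp_transpose[OF permutes_comp_transpose[OF \<tau> ijkl(1-3)] ijkl(4-6)]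
    by (simp_all add: comp_assoc)
  have outside: "H u - chain_shift \<tau> a b c d u = H u - chain_shift \<tau> i j k l u" if "u \<notin> {1..n}" for u
  proof -
    have "u \<notin> {a, b, c, d}" "u \<notin> {i, j, k, l}" using that abcd ijkl by auto
    then show ?thesis by (simp add: chain_shift_outside)
  qed
  have cancel: "\<tau> \<circ> f = \<tau> \<circ> g \<longleftrightarrow> f = g" for f g :: "nat \<Rightarrow> nat"
    using permutes_inj[OF \<tau>] by (auto simp: fun_eq_iff dest: injD)
  have "refl n r (refl n r (orbit_pt \<tau> H) (eps_diff a b)) (eps_diff c d)
          = refl n r (refl n r (orbit_pt \<tau> H) (eps_diff i j)) (eps_diff k l)
        \<longleftrightarrow> orbit_pt (\<tau> \<circ> (transpose a b \<circ> transpose c d)) (\<lambda>u. H u - chain_shift \<tau> a b c d u)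
              = orbit_pt (\<tau> \<circ> (transpose i j \<circ> transpose k l)) (\<lambda>u. H u - chain_shift \<tau> i j k l u)"
    by (simp only: refl2_orbit_pt[OF \<tau> abcd] refl2_orbit_pt[OF \<tau> ijkl])
  also have "\<dots> \<longleftrightarrow> \<tau> \<circ> (transpose a b \<circ> transpose c d) = \<tau> \<circ> (transpose i j \<circ> transpose k l)
                   \<and> (\<lambda>u. H u - chain_shift \<tau> a b c d u) = (\<lambda>u. H u - chain_shift \<tau> i j k l u)"
    by (rule orbit_pt_eq_iff[OF perm outside])
  finally show ?thesis unfolding cancel by (simp add: fun_eq_iff)
qed

lemma admissible_chain_iff_same_endpoint:
  assumes \<tau>: "\<tau> permutes {1..n}" and l: "l = orbit_pt \<tau> (rootcomb_coord n C)"
    and ijkm: "1 \<le> i" "i < j" "j \<le> n" "1 \<le> k" "k < m" "m \<le> n"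
    and adm: "admissible n r \<Lambda> l (eps_diff i j)" "admissible n r \<Lambda> (refl n r l (eps_diff i j)) (eps_diff k m)"
    and abcd: "1 \<le> a" "a < b" "b \<le> n" "1 \<le> c" "c < d" "d \<le> n"
  shows "admissible n r \<Lambda> l (eps_diff a b) \<and> admissible n r \<Lambda> (refl n r l (eps_diff a b)) (eps_diff c d)
           \<and> refl n r (refl n r l (eps_diff i j)) (eps_diff k m) = refl n r (refl n r l (eps_diff a b)) (eps_diff c d)
         \<longleftrightarrow> same_endpoint n \<tau> i j k m a b c d"
proof
  assume "same_endpoint n \<tau> i j k m a b c d"
  then have same: "refl n r (refl n r l (eps_diff a b)) (eps_diff c d) = refl n r (refl n r l (eps_diff i j)) (eps_diff k m)"
    unfolding same_endpoint_def l refl2_orbit_pt_eq_iff[OF \<tau> abcd ijkm] by blast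
  have "excess_set \<tau> i j = {}" "excess_set (\<tau> \<circ> transpose i j) k m = {}"
    using adm unfolding l admissible_orbit_pt_iff[OF \<tau> ijkm(1-3)] admissible_refl_orbit_pt_iff[OF \<tau> ijkm] .
  \<comment> \<open>Same endpoint, hence the same degree gain 2, leaving no room for excess.\<close>
  then have "card (excess_set \<tau> a b) = 0" "card (excess_set (\<tau> \<circ> transpose a b) c d) = 0"
    using same deg_refl2_orbit_pt[OF \<tau> abcd, of C] deg_refl2_orbit_pt[OF \<tau> ijkm, of C] unfolding l by simp_all
  then show "admissible n r \<Lambda> l (eps_diff a b) \<and> admissible n r \<Lambda> (refl n r l (eps_diff a b)) (eps_diff c d)
      \<and> refl n r (refl n r l (eps_diff i j)) (eps_diff k m) = refl n r (refl n r l (eps_diff a b)) (eps_diff c d)"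
    using same finite_excess_set
    unfolding l admissible_orbit_pt_iff[OF \<tau> abcd(1-3)] admissible_refl_orbit_pt_iff[OF \<tau> abcd] by simp
next
  assume "admissible n r \<Lambda> l (eps_diff a b) \<and> admissible n r \<Lambda> (refl n r l (eps_diff a b)) (eps_diff c d)
      \<and> refl n r (refl n r l (eps_diff i j)) (eps_diff k m) = refl n r (refl n r l (eps_diff a b)) (eps_diff c d)"
  then have "transpose i j \<circ> transpose k m = transpose a b \<circ> transpose c d"
      "chain_shift \<tau> i j k m = chain_shift \<tau> a b c d"
    unfolding l refl2_orbit_pt_eq_iff[OF \<tau> ijkm abcd] by simp_all
  then show "same_endpoint n \<tau> i j k m a b c d" using abcd unfolding same_endpoint_def by simp
qed

lemma admissible_chainE:
  assumes "in_WLam n r \<Lambda> l" "posroot n \<alpha>" "posroot n \<beta>"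
    and "admissible n r \<Lambda> l \<alpha>" "admissible n r \<Lambda> (refl n r l \<alpha>) \<beta>"
  obtains \<tau> C i j k m where "\<tau> permutes {1..n}" "l = orbit_pt \<tau> (rootcomb_coord n C)"
    "1 \<le> i" "i < j" "j \<le> n" "\<alpha> = eps_diff i j" "1 \<le> k" "k < m" "m \<le> n" "\<beta> = eps_diff k m"
    "excess_set \<tau> i j = {}" "excess_set (\<tau> \<circ> transpose i j) k m = {}"
proof -
  obtain \<tau> C where \<tau>: "\<tau> permutes {1..n}" and l: "l = orbit_pt \<tau> (rootcomb_coord n C)"
    using in_WLamE[OF assms(1)] .
  obtain i j k m where ij: "1 \<le> i" "i < j" "j \<le> n" "\<alpha> = eps_diff i j"
    and km: "1 \<le> k" "k < m" "m \<le> n" "\<beta> = eps_diff k m"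
    using assms(2,3) unfolding posroot_iff by blast
  have "excess_set \<tau> i j = {}" "excess_set (\<tau> \<circ> transpose i j) k m = {}"
    using assms(4,5) unfolding l ij(4) km(4) admissible_orbit_pt_iff[OF \<tau> ij(1-3)]
      admissible_refl_orbit_pt_iff[OF \<tau> ij(1-3) km(1-3)] .
  then show thesis using that \<tau> l ij km by blast
qed

lemma simple_root_of_admissible_chain:
  assumes "in_WLam n r \<Lambda> l" "posroot n \<alpha>" "posroot n \<beta>"
    and "admissible n r \<Lambda> l \<alpha>" "admissible n r \<Lambda> (refl n r l \<alpha>) \<beta>" and "ip n \<alpha> \<beta> = 2"
  shows "\<alpha> = \<beta> \<and> is_simple_root n \<alpha>"
proof -
  obtain \<tau> C i j k m where \<tau>: "\<tau> permutes {1..n}" and ij: "1 \<le> i" "i < j" "j \<le> n" "\<alpha> = eps_diff i j"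
    and km: "1 \<le> k" "k < m" "m \<le> n" "\<beta> = eps_diff k m"
    and excess: "excess_set \<tau> i j = {}" "excess_set (\<tau> \<circ> transpose i j) k m = {}"
    by (rule admissible_chainE[OF assms(1-5)])
  have "k = i" "m = j" using assms(6) ip_eps_diff_eq_2[OF ij(1-3) km(1-3)] ij(4) km(4) by simp_all
  moreover have "j = Suc i"
    using excess_set_transpose_adjacent[OF permutes_inj[OF \<tau>] ij(2)] excess calculation by simp
  ultimately show ?thesis using ij km unfolding is_simple_root_def sroot_def eps_diff_def by auto
qed

lemma unique_other_admissible_chain:
  assumes "in_WLam n r \<Lambda> l" "posroot n \<alpha>" "posroot n \<beta>"
    and "admissible n r \<Lambda> l \<alpha>" "admissible n r \<Lambda> (refl n r l \<alpha>) \<beta>" and "ip n \<alpha> \<beta> \<noteq> 2"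
  shows "\<exists>!(\<alpha>', \<beta>'). posroot n \<alpha>' \<and> posroot n \<beta>' \<and> \<alpha>' \<noteq> \<alpha> \<and>
           admissible n r \<Lambda> l \<alpha>' \<and> admissible n r \<Lambda> (refl n r l \<alpha>') \<beta>' \<and>
           refl n r (refl n r l \<alpha>) \<beta> = refl n r (refl n r l \<alpha>') \<beta>'"
proof -
  obtain \<tau> C i j k m where \<tau>: "\<tau> permutes {1..n}" and l: "l = orbit_pt \<tau> (rootcomb_coord n C)"
    and ij: "1 \<le> i" "i < j" "j \<le> n" "\<alpha> = eps_diff i j"
    and km: "1 \<le> k" "k < m" "m \<le> n" "\<beta> = eps_diff k m"
    and excess: "excess_set \<tau> i j = {}" "excess_set (\<tau> \<circ> transpose i j) k m = {}"
    by (rule admissible_chainE[OF assms(1-5)])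
  have "(i, j) \<noteq> (k, m)" using assms(6) ip_eps_diff_eq_2[OF ij(1-3) km(1-3)] ij(4) km(4) by auto
  with unique_other_chain[OF permutes_inj[OF \<tau>] ij(1-3) km(1-3) _ excess]
  have "\<exists>!(a, b, c, d). (a, b) \<noteq> (i, j) \<and> same_endpoint n \<tau> i j k m a b c d" .
  then show ?thesis
  proof (rule ex1_posroot_pairI[rotated 2])
    fix a b c d assume abcd: "1 \<le> a" "a < b" "b \<le> n" "1 \<le> c" "c < d" "d \<le> n"
    have "eps_diff a b \<noteq> \<alpha> \<longleftrightarrow> (a, b) \<noteq> (i, j)" using eps_diff_eq_iff[OF abcd(2) ij(2)] ij(4) by simp
    then show "eps_diff a b \<noteq> \<alpha> \<and> admissible n r \<Lambda> l (eps_diff a b)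
        \<and> admissible n r \<Lambda> (refl n r l (eps_diff a b)) (eps_diff c d)
        \<and> refl n r (refl n r l \<alpha>) \<beta> = refl n r (refl n r l (eps_diff a b)) (eps_diff c d)
      \<longleftrightarrow> (a, b) \<noteq> (i, j) \<and> same_endpoint n \<tau> i j k m a b c d"
      using admissible_chain_iff_same_endpoint[OF \<tau> l ij(1-3) km(1-3) _ _ abcd] assms(4,5)
      unfolding ij(4) km(4) by blast
  qed (simp add: same_endpoint_def)
qed

end

theorem theorem4p4:
  fixes n r :: nat and \<Lambda> l \<alpha> \<beta> :: "nat \<Rightarrow> real"
  assumes "n \<ge> 2" and "r \<ge> n + 2"
    and "in_P n \<Lambda>"
    and "\<forall>i. 1 \<le> i \<and> i \<le> n - 1 \<longrightarrow> ip n \<Lambda> (sroot i) > 0"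
    and "ip n \<Lambda> (theta n) < real r"
    and "in_WLam n r \<Lambda> l"
    and "posroot n \<alpha>" and "posroot n \<beta>"
    and "admissible n r \<Lambda> l \<alpha>"
    and "admissible n r \<Lambda> (refl n r l \<alpha>) \<beta>"
  shows "(ip n \<alpha> \<beta> = 2 \<longrightarrow> \<alpha> = \<beta> \<and> is_simple_root n \<alpha>) \<and>
         (ip n \<alpha> \<beta> \<noteq> 2 \<longrightarrow>
            (\<exists>!(\<alpha>', \<beta>'). posroot n \<alpha>' \<and> posroot n \<beta>' \<and> \<alpha>' \<noteq> \<alpha> \<and>
               admissible n r \<Lambda> l \<alpha>' \<and> admissible n r \<Lambda> (refl n r l \<alpha>') \<beta>' \<and>
               refl n r (refl n r l \<alpha>) \<beta> = refl n r (refl n r l \<alpha>') \<beta>'))"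
proof -
  interpret alcove_weight n r \<Lambda> using assms(2-5) by unfold_locales auto
  show ?thesis
    using simple_root_of_admissible_chain[OF assms(6-10)] unique_other_admissible_chain[OF assms(6-10)]
    by blast
qed

end
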